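(* Let $\mathcal{L}$ be an intuitionistic abstract logic. For all $z,a,b\in Expr_{\mathcal{L}}$: $z\le a\to b$ if and only if $z\wedge a\le b$.
   Context: An abstract logic is a triple $\mathcal{L}=(Expr_{\mathcal{L}},Th_{\mathcal{L}},\mathcal{C}_{\mathcal{L}})$ where $Expr_{\mathcal{L}}$ is a set, $Th_{\mathcal{L}}$ a non-empty set of subsets of $Expr_{\mathcal{L}}$ (theories) closed under intersections of non-empty subfamilies, and $\mathcal{C}_{\mathcal{L}}$ a set of operations on $Expr_{\mathcal{L}}$. $\mathcal{L}$ is closed under union of chains if the union of every non-empty chain of theories is a theory. A theory $T$ is prime if $T=\bigcap\mathcal{T}$ with $\mathcal{T}\subseteq Th_{\mathcal{L}}$ non-empty finite implies $T\in\mathcal{T}$; totally prime if this holds for non-empty $\mathcal{T}$ of any size. $PTh_{\mathcal{L}}$, $TPTh_{\mathcal{L}}$ denote these sets. An intuitionistic abstract logic is one closed under union of chains with binary connectives $\vee,\wedge,\to$ and constants $\top,\bot$ such that for all $a,b$ and all $T\in TPTh_{\mathcal{L}}$: $a\vee b\in T$ iff $a\in T$ or $b\in T$; $a\wedge b\in T$ iff $a,b\in T$; $a\to b\in T$ iff for every totally prime $T'\supseteq T$, $a\in T'$ implies $b\in T'$; $\top$ lies in every theory and $\bot$ in none. The order: $a\le b$ iff $S_a\subseteq S_b$, where $S_a=\{P\in PTh_{\mathcal{L}}: a\in P\}$. *)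

theory Defs
  imports Main
begin

text \<open>Expressions are the elements of the type 'e (Expr_L); Th is the set of theories.
The operations in C_L relevant here are the connectives dis, con, imp and constants tp, bt.\<close>

definition abstract_logic :: "'e set set \<Rightarrow> bool" where
  "abstract_logic Th \<longleftrightarrow> Th \<noteq> {} \<and>
     (\<forall>F. F \<noteq> {} \<and> F \<subseteq> Th \<longrightarrow> \<Inter>F \<in> Th)"

definition closed_union_chains :: "'e set set \<Rightarrow> bool" where
  "closed_union_chains Th \<longleftrightarrow>
     (\<forall>C. C \<noteq> {} \<and> C \<subseteq> Th \<and> (\<forall>X\<in>C. \<forall>Y\<in>C. X \<subseteq> Y \<or> Y \<subseteq> X) \<longrightarrow> \<Union>C \<in> Th)"

definition prime_theory :: "'e set set \<Rightarrow> 'e set \<Rightarrow> bool" where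
  "prime_theory Th T \<longleftrightarrow> T \<in> Th \<and>
     (\<forall>F. F \<subseteq> Th \<and> F \<noteq> {} \<and> finite F \<and> T = \<Inter>F \<longrightarrow> T \<in> F)"

definition totally_prime_theory :: "'e set set \<Rightarrow> 'e set \<Rightarrow> bool" where
  "totally_prime_theory Th T \<longleftrightarrow> T \<in> Th \<and>
     (\<forall>F. F \<subseteq> Th \<and> F \<noteq> {} \<and> T = \<Inter>F \<longrightarrow> T \<in> F)"

definition intuitionistic_logic ::
  "'e set set \<Rightarrow> ('e \<Rightarrow> 'e \<Rightarrow> 'e) \<Rightarrow> ('e \<Rightarrow> 'e \<Rightarrow> 'e) \<Rightarrow> ('e \<Rightarrow> 'e \<Rightarrow> 'e) \<Rightarrow> 'e \<Rightarrow> 'e \<Rightarrow> bool"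
  where
  "intuitionistic_logic Th dis con imp tp bt \<longleftrightarrow>
     abstract_logic Th \<and> closed_union_chains Th \<and>
     (\<forall>T a b. totally_prime_theory Th T \<longrightarrow>
        (dis a b \<in> T \<longleftrightarrow> a \<in> T \<or> b \<in> T) \<and>
        (con a b \<in> T \<longleftrightarrow> a \<in> T \<and> b \<in> T) \<and>
        (imp a b \<in> T \<longleftrightarrow>
           (\<forall>T'. totally_prime_theory Th T' \<and> T \<subseteq> T' \<longrightarrow> a \<in> T' \<longrightarrow> b \<in> T'))) \<and>
     (\<forall>T\<in>Th. tp \<in> T \<and> bt \<notin> T)"

definition S_set :: "'e set set \<Rightarrow> 'e \<Rightarrow> 'e set set" where
  "S_set Th a = {P. prime_theory Th P \<and> a \<in> P}"

definition logic_le :: "'e set set \<Rightarrow> 'e \<Rightarrow> 'e \<Rightarrow> bool" where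
  "logic_le Th a b \<longleftrightarrow> S_set Th a \<subseteq> S_set Th b"

end

theory Submission
  imports Defs
begin

text \<open>Every prime theory omitting an expression extends, by Zorn's lemma, to a totally prime theory
still omitting it, so the order on expressions can equivalently be read off the totally prime
theories. There the clauses for conjunction and implication make the residuation law a direct
calculation, since membership of z persists into every totally prime extension.\<close>

lemma maximal_omitting_theory_is_totally_prime:
  assumes M: "M \<in> Th" "a \<notin> M"
    and maximal: "\<forall>X\<in>Th. M \<subseteq> X \<longrightarrow> a \<notin> X \<longrightarrow> X = M"
  shows "totally_prime_theory Th M"
  unfolding totally_prime_theory_def
proof (intro conjI allI impI)
  show "M \<in> Th" by (fact M(1))
  fix F assume F: "F \<subseteq> Th \<and> F \<noteq> {} \<and> M = \<Inter>F"
  show "M \<in> F"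
  proof (rule ccontr)
    assume "M \<notin> F"
    have "a \<in> X" if "X \<in> F" for X
    proof -
      have "X \<in> Th" "M \<subseteq> X" using F that by auto
      moreover have "X \<noteq> M" using \<open>M \<notin> F\<close> that by blast
      ultimately show "a \<in> X" using maximal by blast
    qed
    then have "a \<in> M" using F by blast
    with M(2) show False ..
  qed
qed

lemma exists_maximal_omitting_theory:
  assumes chains: "closed_union_chains Th" and P: "P \<in> Th" and a: "a \<notin> P"
  shows "\<exists>M\<in>Th. P \<subseteq> M \<and> a \<notin> M \<and> (\<forall>X\<in>Th. M \<subseteq> X \<longrightarrow> a \<notin> X \<longrightarrow> X = M)"
proof -
  define A where "A = {T. T \<in> Th \<and> P \<subseteq> T \<and> a \<notin> T}"
  have "\<exists>U\<in>A. \<forall>X\<in>C. X \<subseteq> U" if C: "C \<in> chains A" for C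
  proof (cases "C = {}")
    case True
    have "P \<in> A" using P a by (simp add: A_def)
    with True show ?thesis by blast
  next
    case False
    from C have "C \<subseteq> A" and linear: "\<forall>X\<in>C. \<forall>Y\<in>C. X \<subseteq> Y \<or> Y \<subseteq> X"
      unfolding chains_def chain_subset_def by auto
    then have "C \<subseteq> Th" "\<forall>X\<in>C. P \<subseteq> X \<and> a \<notin> X"
      unfolding A_def by auto
    moreover from this(1) have "\<Union>C \<in> Th"
      using chains False linear unfolding closed_union_chains_def by blast
    ultimately have "\<Union>C \<in> A"
      using False unfolding A_def by auto
    then show ?thesis by blast
  qed
  then obtain M where M: "M \<in> A" and maximal: "\<forall>X\<in>A. M \<subseteq> X \<longrightarrow> X = M"
    using Zorn_Lemma2[of A] by blast
  then have "M \<in> Th" "P \<subseteq> M" "a \<notin> M"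
    unfolding A_def by auto
  moreover have "X = M" if "X \<in> Th" "M \<subseteq> X" "a \<notin> X" for X
  proof -
    have "X \<in> A" using that \<open>P \<subseteq> M\<close> unfolding A_def by auto
    then show "X = M" using maximal \<open>M \<subseteq> X\<close> by blast
  qed
  ultimately show ?thesis by blast
qed

lemma totally_prime_extension:
  assumes "closed_union_chains Th" "P \<in> Th" "a \<notin> P"
  obtains T where "totally_prime_theory Th T" "P \<subseteq> T" "a \<notin> T"
proof -
  obtain M where "M \<in> Th" "P \<subseteq> M" "a \<notin> M" "\<forall>X\<in>Th. M \<subseteq> X \<longrightarrow> a \<notin> X \<longrightarrow> X = M"
    using exists_maximal_omitting_theory[OF assms] by blast
  then show thesis
    using that maximal_omitting_theory_is_totally_prime[of M Th a] by blast
qed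

lemma prime_theory_if_totally_prime:
  "totally_prime_theory Th T \<Longrightarrow> prime_theory Th T"
  unfolding totally_prime_theory_def prime_theory_def by blast

lemma logic_le_iff_totally_prime:
  assumes chains: "closed_union_chains Th"
  shows "logic_le Th x y \<longleftrightarrow> (\<forall>T. totally_prime_theory Th T \<longrightarrow> x \<in> T \<longrightarrow> y \<in> T)"
proof
  assume "logic_le Th x y"
  then show "\<forall>T. totally_prime_theory Th T \<longrightarrow> x \<in> T \<longrightarrow> y \<in> T"
    unfolding logic_le_def S_set_def using prime_theory_if_totally_prime by blast
next
  assume on_totally_prime: "\<forall>T. totally_prime_theory Th T \<longrightarrow> x \<in> T \<longrightarrow> y \<in> T"
  have "y \<in> P" if P: "prime_theory Th P" "x \<in> P" for P
  proof (rule ccontr)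
    assume "y \<notin> P"
    moreover have "P \<in> Th" using P(1) unfolding prime_theory_def by blast
    ultimately obtain T where "totally_prime_theory Th T" "P \<subseteq> T" "y \<notin> T"
      using totally_prime_extension[OF chains] by blast
    then show False using on_totally_prime P(2) by blast
  qed
  then show "logic_le Th x y"
    unfolding logic_le_def S_set_def by blast
qed

theorem lemma4p2:
  fixes Th :: "'e set set" and dis con imp :: "'e \<Rightarrow> 'e \<Rightarrow> 'e" and tp bt :: 'e
  assumes "intuitionistic_logic Th dis con imp tp bt"
  shows "logic_le Th z (imp a b) \<longleftrightarrow> logic_le Th (con z a) b"
proof -
  have chains: "closed_union_chains Th"
    using assms unfolding intuitionistic_logic_def by blast
  have con: "con x y \<in> T \<longleftrightarrow> x \<in> T \<and> y \<in> T" if "totally_prime_theory Th T" for T x y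
    using assms that unfolding intuitionistic_logic_def by blast
  have imp: "imp x y \<in> T \<longleftrightarrow> (\<forall>T'. totally_prime_theory Th T' \<and> T \<subseteq> T' \<longrightarrow> x \<in> T' \<longrightarrow> y \<in> T')"
    if "totally_prime_theory Th T" for T x y
    using assms that unfolding intuitionistic_logic_def by blast
  have "(\<forall>T. totally_prime_theory Th T \<longrightarrow> z \<in> T \<longrightarrow> imp a b \<in> T) \<longleftrightarrow>
        (\<forall>T. totally_prime_theory Th T \<longrightarrow> con z a \<in> T \<longrightarrow> b \<in> T)"
  proof (intro iffI allI impI)
    fix T assume z_imp: "\<forall>T. totally_prime_theory Th T \<longrightarrow> z \<in> T \<longrightarrow> imp a b \<in> T"
      and T: "totally_prime_theory Th T" and "con z a \<in> T"
    then have "z \<in> T" "a \<in> T" using con[OF T] by blast+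
    then show "b \<in> T" using z_imp T imp[OF T] by blast
  next
    fix T assume za_b: "\<forall>T. totally_prime_theory Th T \<longrightarrow> con z a \<in> T \<longrightarrow> b \<in> T"
      and T: "totally_prime_theory Th T" and "z \<in> T"
    have "b \<in> T'" if T': "totally_prime_theory Th T'" "T \<subseteq> T'" "a \<in> T'" for T'
      using za_b T' \<open>z \<in> T\<close> con[OF T'(1)] by blast
    then show "imp a b \<in> T" using imp[OF T] by blast
  qed
  then show ?thesis
    unfolding logic_le_iff_totally_prime[OF chains] .
qed

end
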